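(* Let $m\ge 2$ and $\beta=0$. A real number $\lambda$ is a principal eigenvalue of $\Delta_0$ (with homogeneous Dirichlet boundary condition) if and only if $\lambda\in(0,1]$. Moreover, for every $\lambda\in(0,1]$ the function $u(x)=(1-\lambda)^{|x|}$ (with the convention $0^0=1$) is an eigenfunction associated with $\lambda$.
   Context: Tree: for an integer $m\ge2$, the regular $m$-branching tree $\mathbb{T}_m$ has as vertices the root $\emptyset$ and all finite sequences $(\emptyset,a_1,\dots,a_k)$, $k\in\mathbb{N}$, $a_i\in\{0,\dots,m-1\}$. The level of $x=(\emptyset,a_1,\dots,a_k)$ is $|x|=k$ ($|\emptyset|=0$). The successors of $x$ are $(x,i)$, $i\in\{0,\dots,m-1\}$; for $x\ne\emptyset$, $\hat x$ denotes its unique immediate predecessor. A branch is an infinite sequence $(x_n)_{n\ge0}$ with $x_0=\emptyset$ and $x_{n+1}$ a successor of $x_n$; $\partial\mathbb{T}_m$ is the set of branches. For $y=(x_n)\in\partial\mathbb{T}_m$, $\lim_{x\to y}u(x)=L$ means $\lim_{n\to\infty}u(x_n)=L$ (similarly for $\liminf$, $\limsup$). Operator: for $\beta\in[0,1)$ let $p_\beta=1$ if $\beta=0$ and $p_\beta=\beta/(1-\beta)$ if $\beta\in(0,1)$. For $u:\mathbb{T}_m\to\mathbb{R}$, $\Delta_\beta u(\emptyset)=\frac1m\sum_{i=0}^{m-1}u(\emptyset,i)-u(\emptyset)$ and, for $x\ne\emptyset$, $\Delta_\beta u(x)=\big(\beta u(\hat x)+\frac{1-\beta}{m}\sum_{i=0}^{m-1}u(x,i)-u(x)\big)p_\beta^{-|x|}$.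 Eigenvalues: $\lambda\in\mathbb{R}$ is an eigenvalue of $\Delta_\beta$ if there is a bounded $u:\mathbb{T}_m\to\mathbb{R}$, $u\not\equiv0$, with $-\Delta_\beta u=\lambda u$ on $\mathbb{T}_m$ and $\lim_{x\to y}u(x)=0$ for every $y\in\partial\mathbb{T}_m$ ($u$ is an eigenfunction). An eigenvalue $\lambda>0$ is principal if it has a non-negative eigenfunction. *)

theory Defs
  imports Complex_Main
begin

text \<open>Vertices of the regular m-branching tree: finite lists of digits < m;
  the root is the empty list, the level is the length, the successors of x
  are x @ [i], the immediate predecessor of x is butlast x.\<close>

definition tree :: "nat \<Rightarrow> nat list set" where
  "tree m = {xs. \<forall>a\<in>set xs. a < m}"

definition p_beta :: "real \<Rightarrow> real" where
  "p_beta \<beta> = (if \<beta> = 0 then 1 else \<beta> / (1 - \<beta>))"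

definition Delta :: "nat \<Rightarrow> real \<Rightarrow> (nat list \<Rightarrow> real) \<Rightarrow> nat list \<Rightarrow> real" where
  "Delta m \<beta> u x =
     (if x = [] then (1 / real m) * (\<Sum>i<m. u (x @ [i])) - u x
      else (\<beta> * u (butlast x) + ((1 - \<beta>) / real m) * (\<Sum>i<m. u (x @ [i])) - u x)
           / (p_beta \<beta>) ^ length x)"

definition branch :: "nat \<Rightarrow> (nat \<Rightarrow> nat list) \<Rightarrow> bool" where
  "branch m X \<longleftrightarrow> X 0 = [] \<and> (\<forall>n. \<exists>i<m. X (Suc n) = X n @ [i])"

definition eigenfunction :: "nat \<Rightarrow> real \<Rightarrow> real \<Rightarrow> (nat list \<Rightarrow> real) \<Rightarrow> bool" where
  "eigenfunction m \<beta> lam u \<longleftrightarrow>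
     (\<exists>C. \<forall>x\<in>tree m. \<bar>u x\<bar> \<le> C) \<and>
     (\<exists>x\<in>tree m. u x \<noteq> 0) \<and>
     (\<forall>x\<in>tree m. - Delta m \<beta> u x = lam * u x) \<and>
     (\<forall>X. branch m X \<longrightarrow> (\<lambda>n. u (X n)) \<longlonglongrightarrow> 0)"

definition eigenvalue :: "nat \<Rightarrow> real \<Rightarrow> real \<Rightarrow> bool" where
  "eigenvalue m \<beta> lam \<longleftrightarrow> (\<exists>u. eigenfunction m \<beta> lam u)"

definition principal_eigenvalue :: "nat \<Rightarrow> real \<Rightarrow> real \<Rightarrow> bool" where
  "principal_eigenvalue m \<beta> lam \<longleftrightarrow>
     lam > 0 \<and> (\<exists>u. eigenfunction m \<beta> lam u \<and> (\<forall>x\<in>tree m. u x \<ge> 0))"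

end

theory Submission
  imports Defs
begin

text \<open>For \<open>\<beta> = 0\<close> the equation \<open>-\<Delta>\<^sub>0 u = \<lambda> u\<close> says that the mean of \<open>u\<close> over the
  children of \<open>x\<close> equals \<open>(1 - \<lambda>) u(x)\<close>. A function of the level alone therefore
  solves it iff it is geometric with ratio \<open>1 - \<lambda>\<close>, and for \<open>0 < \<lambda> \<le> 1\<close> this ratio lies
  in \<open>[0, 1)\<close>, so the function is bounded, nonnegative and vanishes along every branch.
  Conversely, if \<open>\<lambda> > 1\<close> and \<open>u \<ge> 0\<close>, the nonnegative mean over the children equals
  the nonpositive \<open>(1 - \<lambda>) u(x)\<close>, which forces \<open>u = 0\<close>.\<close>

lemma Nil_in_tree: "[] \<in> tree m"
  by (simp add: tree_def)

lemma snoc_in_tree: "x \<in> tree m \<Longrightarrow> i < m \<Longrightarrow> x @ [i] \<in> tree m"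
  by (auto simp: tree_def)

lemma Delta_zero: "Delta m 0 u x = (1 / real m) * (\<Sum>i<m. u (x @ [i])) - u x"
  by (simp add: Delta_def p_beta_def)

lemma length_branch:
  assumes "branch m X"
  shows "length (X n) = n"
  using assms by (induction n) (auto simp: branch_def, metis length_append_singleton)

lemma eigenfunction_geometric:
  assumes "m > 0" and "l \<in> {0<..1::real}"
  shows "eigenfunction m 0 l (\<lambda>x. (1 - l) ^ length x)"
  unfolding eigenfunction_def
proof (intro conjI allI impI)
  have ratio: "0 \<le> 1 - l" "1 - l < 1"
    using assms(2) by auto
  show "\<exists>C. \<forall>x\<in>tree m. \<bar>(1 - l) ^ length x\<bar> \<le> C"
    using ratio by (auto intro!: exI[of _ 1] power_le_one)
  show "\<exists>x\<in>tree m. (1 - l) ^ length x \<noteq> 0"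
    using Nil_in_tree by force
  show "\<forall>x\<in>tree m. - Delta m 0 (\<lambda>x. (1 - l) ^ length x) x = l * (1 - l) ^ length x"
    using assms(1) by (simp add: Delta_zero algebra_simps)
  fix X
  assume "branch m X"
  then show "(\<lambda>n. (1 - l) ^ length (X n)) \<longlonglongrightarrow> 0"
    using ratio by (simp add: length_branch LIMSEQ_realpow_zero)
qed

lemma nonneg_eigenfunction_imp_le_one:
  assumes eig: "eigenfunction m 0 lam u" and nonneg: "\<forall>x\<in>tree m. u x \<ge> 0"
  shows "lam \<le> 1"
proof (rule ccontr)
  assume "\<not> lam \<le> 1"
  have "u x = 0" if x: "x \<in> tree m" for x
  proof -
    have "- Delta m 0 u x = lam * u x"
      using eig x unfolding eigenfunction_def by blast
    then have mean: "(1 / real m) * (\<Sum>i<m. u (x @ [i])) = (1 - lam) * u x"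
      by (simp add: Delta_zero algebra_simps)
    have "0 \<le> (\<Sum>i<m. u (x @ [i]))"
      using nonneg snoc_in_tree x by (blast intro: sum_nonneg)
    then have "0 \<le> (1 - lam) * u x"
      by (simp flip: mean)
    with \<open>\<not> lam \<le> 1\<close> nonneg x show ?thesis
      by (auto simp: zero_le_mult_iff)
  qed
  then show False
    using eig unfolding eigenfunction_def by blast
qed

theorem theorem1p1:
  fixes m :: nat and lam :: real
  assumes "m \<ge> 2"
  shows "(principal_eigenvalue m 0 lam \<longleftrightarrow> lam \<in> {0<..1}) \<and>
         (\<forall>l\<in>{0<..1::real}. eigenfunction m 0 l (\<lambda>x. (1 - l) ^ length x))"
proof -
  have geometric: "\<forall>l\<in>{0<..1::real}. eigenfunction m 0 l (\<lambda>x. (1 - l) ^ length x)"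
    using assms eigenfunction_geometric by simp
  moreover have "principal_eigenvalue m 0 lam \<longleftrightarrow> lam \<in> {0<..1}"
  proof
    assume "principal_eigenvalue m 0 lam"
    then show "lam \<in> {0<..1}"
      unfolding principal_eigenvalue_def using nonneg_eigenfunction_imp_le_one by auto
  next
    assume "lam \<in> {0<..1}"
    then show "principal_eigenvalue m 0 lam"
      unfolding principal_eigenvalue_def using geometric
      by (auto intro!: exI[of _ "\<lambda>x. (1 - lam) ^ length x"])
  qed
  ultimately show ?thesis
    by blast
qed

end
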